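(* Let $G$ be a connected weighted multigraph on the vertex set $V$, $|V|=n\ge2$, with positive edge weights and Laplacian matrix $L$, and let $\tilde G$ be any balance-graph of $G$. For $\alpha>0$ let $Q_\alpha=(I+\alpha L)^{-1}=(q_{ij}(\alpha))$ and let $$d^F_\alpha(i,j)=\theta\Bigl(\tfrac12\bigl(\ln q_{ii}(\alpha)+\ln q_{jj}(\alpha)\bigr)-\ln q_{ij}(\alpha)\Bigr),\qquad\theta=\ln\bigl(e+\alpha^{2/n}\bigr)\frac{\alpha-1}{\ln\alpha}$$ ($\theta=\ln(e+1)$ at $\alpha=1$) be the logarithmic forest distance with edge weight transformation $w\mapsto\alpha w$. Then for every $\alpha>0$ and all $i,j\in V$, $d^F_\alpha(i,j)=\tilde d^{W}_\alpha(i,j)$, where $\tilde d^W_\alpha$ is the walk distance of $\tilde G$: with $\tilde A$ the weighted adjacency matrix of $\tilde G$, $\tilde\rho$ its spectral radius, $t=(\tilde\rho+\alpha^{-1})^{-1}$ and $(I-t\tilde A)^{-1}=(r_{ij})$, $\tilde d^W_\alpha(i,j)=\theta\bigl(\tfrac12(\ln r_{ii}+\ln r_{jj})-\ln r_{ij}\bigr)$.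
   Context: Loops and multiple edges are allowed. The weighted adjacency matrix $A=(a_{ij})$ has $a_{ij}$ equal to the sum of weights of the edges joining $i$ and $j$; $L=\operatorname{diag}(A\mathbf 1)-A$. A balance-graph of $G$ is a graph $\tilde G$ with $V(\tilde G)=V$, $E(G)\subseteq E(\tilde G)$, the edges of $E(G)$ keeping their weights, $E(\tilde G)\setminus E(G)$ consisting of loops (with positive weights), and such that the weighted adjacency matrix of $\tilde G$ has constant row sums. *)

theory Defs
  imports "HOL-Analysis.Analysis"
begin

text \<open>A weighted multigraph (loops and multiple edges allowed) on the vertex type 'n
  is given by a set of edges E, an endpoint map ends (a loop has one endpoint, an ordinary
  edge two) and a weight map w.\<close>

definition multigraph :: "'e set \<Rightarrow> ('e \<Rightarrow> 'n set) \<Rightarrow> ('e \<Rightarrow> real) \<Rightarrow> bool" where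
  "multigraph E ends w \<longleftrightarrow> finite E \<and>
     (\<forall>e\<in>E. ends e \<noteq> {} \<and> card (ends e) \<le> 2 \<and> w e > 0)"

definition wadj :: "'e set \<Rightarrow> ('e \<Rightarrow> 'n::finite set) \<Rightarrow> ('e \<Rightarrow> real) \<Rightarrow> real^'n^'n" where
  "wadj E ends w = (\<chi> i j. \<Sum>e\<in>{e\<in>E. ends e = {i, j}}. w e)"

definition mg_connected :: "'e set \<Rightarrow> ('e \<Rightarrow> 'n set) \<Rightarrow> bool" where
  "mg_connected E ends \<longleftrightarrow>
     (\<forall>i j. (\<lambda>x y. \<exists>e\<in>E. ends e = {x, y})\<^sup>*\<^sup>* i j)"

definition laplacian :: "real^'n^'n \<Rightarrow> real^'n::finite^'n" where
  "laplacian A = (\<chi> i j. (if i = j then (\<Sum>k\<in>UNIV. A $ i $ k) else 0) - A $ i $ j)"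

definition balance_graph ::
  "'e set \<Rightarrow> ('e \<Rightarrow> 'n::finite set) \<Rightarrow> ('e \<Rightarrow> real) \<Rightarrow>
   'e set \<Rightarrow> ('e \<Rightarrow> 'n set) \<Rightarrow> ('e \<Rightarrow> real) \<Rightarrow> bool" where
  "balance_graph E ends w E' ends' w' \<longleftrightarrow>
     finite E' \<and> E \<subseteq> E' \<and>
     (\<forall>e\<in>E. ends' e = ends e \<and> w' e = w e) \<and>
     (\<forall>e\<in>E' - E. card (ends' e) = 1 \<and> w' e > 0) \<and>
     (\<exists>c. \<forall>i. (\<Sum>j\<in>UNIV. wadj E' ends' w' $ i $ j) = c)"

definition cmatrix :: "real^'n^'m \<Rightarrow> complex^'n^'m" where
  "cmatrix A = (\<chi> i j. complex_of_real (A $ i $ j))"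

definition spectral_radius :: "real^'n::finite^'n \<Rightarrow> real" where
  "spectral_radius A = Sup {cmod c | c. \<exists>v::complex^'n. v \<noteq> 0 \<and> cmatrix A *v v = c *s v}"

definition theta :: "nat \<Rightarrow> real \<Rightarrow> real" where
  "theta n \<alpha> = (if \<alpha> = 1 then ln (exp 1 + 1)
                 else ln (exp 1 + \<alpha> powr (2 / real n)) * (\<alpha> - 1) / ln \<alpha>)"

definition log_dist :: "nat \<Rightarrow> real \<Rightarrow> real^'n^'n \<Rightarrow> 'n \<Rightarrow> 'n \<Rightarrow> real" where
  "log_dist n \<alpha> M i j = theta n \<alpha> * ((ln (M $ i $ i) + ln (M $ j $ j)) / 2 - ln (M $ i $ j))"

definition forest_dist :: "real \<Rightarrow> real^'n::finite^'n \<Rightarrow> 'n \<Rightarrow> 'n \<Rightarrow> real" where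
  "forest_dist \<alpha> A = log_dist CARD('n) \<alpha> (matrix_inv (mat 1 + \<alpha> *\<^sub>R laplacian A))"

definition walk_dist :: "real \<Rightarrow> real^'n::finite^'n \<Rightarrow> 'n \<Rightarrow> 'n \<Rightarrow> real" where
  "walk_dist \<alpha> A = (let t = 1 / (spectral_radius A + 1 / \<alpha>) in
     log_dist CARD('n) \<alpha> (matrix_inv (mat 1 - t *\<^sub>R A)))"

end

theory Submission
  imports Defs
begin

text \<open>The adjacency matrix B of a balance-graph agrees with A off the diagonal and has constant
  row sums c, so B = c I - L. Being nonnegative with constant row sums, B has spectral radius c,
  and hence I - t B = (1 + \<alpha> c)^-1 (I + \<alpha> L) for t = (c + 1/\<alpha>)^-1. The matrices inverted in the
  two distances therefore differ by the positive factor 1 + \<alpha> c, which cancels in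
  (ln r_ii + ln r_jj)/2 - ln r_ij as soon as all entries of (I + \<alpha> L)^-1 are positive. Positivity
  follows from a discrete minimum principle for I + \<alpha> L together with connectivity of G.\<close>

lemma matrix_inv_eqI:
  fixes A :: "'a::semiring_1^'n^'m" and B :: "'a^'m^'n"
  assumes "A ** B = mat 1" "B ** A = mat 1"
  shows "matrix_inv A = B"
proof -
  let ?C = "matrix_inv A"
  have C: "A ** ?C = mat 1 \<and> ?C ** A = mat 1"
    unfolding matrix_inv_def by (rule someI[of _ B]) (use assms in auto)
  have "?C = ?C ** (A ** B)" using assms by simp
  also have "\<dots> = (?C ** A) ** B" by (simp add: matrix_mul_assoc)
  also have "\<dots> = B" using C by simp
  finally show ?thesis .
qed

lemma invertible_matrix_inv:
  fixes A :: "'a::semiring_1^'n^'m"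
  assumes "invertible A"
  shows "A ** matrix_inv A = mat 1" "matrix_inv A ** A = mat 1"
  using assms matrix_inv_eqI unfolding invertible_def by metis+

lemma matrix_inv_scaleR:
  fixes M :: "'a::real_algebra_1^'n^'m"
  assumes "invertible M" "s \<noteq> 0"
  shows "matrix_inv (s *\<^sub>R M) = inverse s *\<^sub>R matrix_inv M"
  by (rule matrix_inv_eqI)
    (use assms invertible_matrix_inv in \<open>simp_all add: matrix_scalar_ac scalar_matrix_assoc[symmetric]\<close>)

lemma id_plus_laplacian_row:
  fixes A :: "real^'n::finite^'n"
  shows "(\<Sum>l\<in>UNIV. (mat 1 + \<alpha> *\<^sub>R laplacian A)$k$l * y l)
           = y k + \<alpha> * (\<Sum>l\<in>UNIV. A$k$l * (y k - y l))"
proof -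
  have entry: "(mat 1 + \<alpha> *\<^sub>R laplacian A)$k$l * y l
      = (if k = l then (1 + \<alpha> * (\<Sum>m\<in>UNIV. A$k$m)) * y k else 0) - \<alpha> * (A$k$l * y l)" for l
    by (simp add: laplacian_def mat_def algebra_simps)
  show ?thesis
    unfolding entry sum_subtractf
    by (simp add: algebra_simps sum_subtractf sum_distrib_left sum_distrib_right)
qed

lemma laplacian_minimum_principle:
  fixes A :: "real^'n::finite^'n" and x :: "'n \<Rightarrow> real"
  assumes "\<alpha> \<ge> 0" "\<And>k l. A$k$l \<ge> 0"
    and "\<And>k. x k + \<alpha> * (\<Sum>l\<in>UNIV. A$k$l * (x k - x l)) \<ge> 0"
  shows "x k \<ge> 0"
proof -
  obtain m where m: "x m = Min (range x)"
    by (metis (mono_tags) Min_in finite UNIV_not_empty finite_imageI image_is_empty imageE)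
  have le: "x m \<le> x l" for l unfolding m by (rule Min_le) auto
  have "(\<Sum>l\<in>UNIV. A$m$l * (x m - x l)) \<le> 0"
    by (rule sum_nonpos) (simp add: assms(2) le mult_nonneg_nonpos)
  with assms(1) have "\<alpha> * (\<Sum>l\<in>UNIV. A$m$l * (x m - x l)) \<le> 0"
    by (simp add: mult_nonneg_nonpos)
  with assms(3)[of m] le[of k] show ?thesis by linarith
qed

lemma invertible_id_plus_laplacian:
  fixes A :: "real^'n::finite^'n"
  assumes "\<alpha> \<ge> 0" "\<And>k l. A$k$l \<ge> 0"
  shows "invertible (mat 1 + \<alpha> *\<^sub>R laplacian A)"
  unfolding invertible_left_inverse matrix_left_invertible_ker
proof (intro allI impI)
  let ?M = "mat 1 + \<alpha> *\<^sub>R laplacian A"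
  fix x assume Mx: "?M *v x = 0"
  have row: "y$k + \<alpha> * (\<Sum>l\<in>UNIV. A$k$l * (y$k - y$l)) = (?M *v y)$k" for y k
    using id_plus_laplacian_row[of \<alpha> A k "\<lambda>l. y$l"] by (simp add: matrix_vector_mult_def)
  have "x$k \<ge> 0" for k
    by (rule laplacian_minimum_principle[OF assms]) (simp add: row Mx)
  moreover have "(-x)$k \<ge> 0" for k
  proof (rule laplacian_minimum_principle[OF assms])
    have "?M *v (-x) = 0"
      using Mx matrix_vector_mult_diff_distrib[of ?M 0 x] by simp
    then show "(-x)$k + \<alpha> * (\<Sum>l\<in>UNIV. A$k$l * ((-x)$k - (-x)$l)) \<ge> 0" for k
      by (simp only: row) simp
  qed
  ultimately show "x = 0" by (simp add: vec_eq_iff eq_iff)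
qed

lemma forest_matrix_column:
  fixes A :: "real^'n::finite^'n"
  assumes "\<alpha> \<ge> 0" "\<And>k l. A$k$l \<ge> 0"
  defines "Q \<equiv> matrix_inv (mat 1 + \<alpha> *\<^sub>R laplacian A)"
  shows "Q$k$j + \<alpha> * (\<Sum>l\<in>UNIV. A$k$l * (Q$k$j - Q$l$j)) = (if k = j then 1 else 0)"
proof -
  have "((mat 1 + \<alpha> *\<^sub>R laplacian A) ** Q) $ k $ j = (if k = j then 1 else 0)"
    using invertible_matrix_inv(1)[OF invertible_id_plus_laplacian[OF assms(1,2)]]
    by (simp add: Q_def mat_def)
  then show ?thesis
    using id_plus_laplacian_row[of \<alpha> A k "\<lambda>l. Q$l$j"] by (simp add: matrix_matrix_mult_def)
qed

lemma forest_matrix_nonneg: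
  fixes A :: "real^'n::finite^'n"
  assumes "\<alpha> \<ge> 0" "\<And>k l. A$k$l \<ge> 0"
  shows "matrix_inv (mat 1 + \<alpha> *\<^sub>R laplacian A) $ k $ j \<ge> 0"
  by (rule laplacian_minimum_principle[OF assms, where x = "\<lambda>k. _ $ k $ j"])
    (simp add: forest_matrix_column[OF assms])

text \<open>A vanishing entry in column j propagates along edges of the support graph of A,
  but the column equation rules out a zero at j itself.\<close>

lemma forest_matrix_pos:
  fixes A :: "real^'n::finite^'n"
  assumes "\<alpha> > 0" "\<And>k l. A$k$l \<ge> 0" "\<And>k l. (\<lambda>x y. A$x$y > 0)\<^sup>*\<^sup>* k l"
  shows "matrix_inv (mat 1 + \<alpha> *\<^sub>R laplacian A) $ k $ j > 0"
proof -
  let ?Q = "matrix_inv (mat 1 + \<alpha> *\<^sub>R laplacian A)"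
  have nonneg: "?Q$l$j \<ge> 0" for l
    by (rule forest_matrix_nonneg) (use assms in auto)
  have zero: "k \<noteq> j \<and> (\<forall>l. A$k$l > 0 \<longrightarrow> ?Q$l$j = 0)" if "?Q$k$j = 0" for k
  proof -
    let ?S = "\<Sum>l\<in>UNIV. A$k$l * ?Q$l$j"
    have "- \<alpha> * ?S = (if k = j then 1 else 0)"
      using forest_matrix_column[of \<alpha> A k j] assms(1,2) that by (simp add: sum_negf)
    moreover have "\<alpha> * ?S \<ge> 0"
      using assms(1,2) nonneg by (simp add: sum_nonneg)
    ultimately have "k \<noteq> j" and "?S = 0"
      using assms(1) by (auto split: if_splits)
    moreover from \<open>?S = 0\<close> have "A$k$l * ?Q$l$j = 0" for l
      using sum_nonneg_eq_0_iff[of UNIV "\<lambda>l. A$k$l * ?Q$l$j"] assms(2) nonneg by simp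
    ultimately show ?thesis by force
  qed
  show ?thesis
  proof (rule ccontr)
    assume "\<not> ?Q$k$j > 0"
    with nonneg have "?Q$k$j = 0" by (simp add: eq_iff)
    have "?Q$l$j = 0" if "(\<lambda>x y. A$x$y > 0)\<^sup>*\<^sup>* k l" for l
      using that by (induction rule: rtranclp_induct) (use \<open>?Q$k$j = 0\<close> zero in blast)+
    then have "?Q$j$j = 0" using assms(3) by blast
    with zero show False by blast
  qed
qed

lemma cmod_eigenvalue_le_row_sum_bound:
  fixes B :: "real^'n::finite^'n" and v :: "complex^'n"
  assumes "\<And>k l. B$k$l \<ge> 0" "\<And>k. (\<Sum>l\<in>UNIV. B$k$l) \<le> c"
    and "v \<noteq> 0" "cmatrix B *v v = z *s v"
  shows "cmod z \<le> c"
proof -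
  obtain m where m: "cmod (v$m) = Max (range (\<lambda>k. cmod (v$k)))"
    by (metis (mono_tags) Max_in finite UNIV_not_empty finite_imageI image_is_empty imageE)
  have le: "cmod (v$l) \<le> cmod (v$m)" for l unfolding m by (rule Max_ge) auto
  have pos: "cmod (v$m) > 0"
    using assms(3) le by (metis norm_le_zero_iff not_less order.trans vec_eq_iff zero_index)
  have "cmod z * cmod (v$m) = cmod (\<Sum>l\<in>UNIV. complex_of_real (B$m$l) * v$l)"
    using arg_cong[OF assms(4), of "\<lambda>u. u$m"]
    by (simp add: cmatrix_def matrix_vector_mult_def norm_mult)
  also have "\<dots> \<le> (\<Sum>l\<in>UNIV. B$m$l * cmod (v$l))"
    using norm_sum[of "\<lambda>l. complex_of_real (B$m$l) * v$l" UNIV] by (simp add: norm_mult assms(1))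
  also have "\<dots> \<le> (\<Sum>l\<in>UNIV. B$m$l) * cmod (v$m)"
    unfolding sum_distrib_right by (rule sum_mono) (simp add: le assms(1) mult_left_mono)
  also have "\<dots> \<le> c * cmod (v$m)"
    using assms(2) by (simp add: mult_right_mono)
  finally show ?thesis using pos by simp
qed

lemma spectral_radius_const_row_sums:
  fixes B :: "real^'n::finite^'n"
  assumes "\<And>k l. B$k$l \<ge> 0" "\<And>k. (\<Sum>l\<in>UNIV. B$k$l) = c"
  shows "spectral_radius B = c"
  unfolding spectral_radius_def
proof (rule cSup_eq_maximum)
  have "c \<ge> 0" using assms sum_nonneg by metis
  moreover have "cmatrix B *v 1 = complex_of_real c *s (1::complex^'n)"
    using assms(2) by (simp add: vec_eq_iff cmatrix_def matrix_vector_mult_def flip: of_real_sum)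
  moreover have "(1::complex^'n) \<noteq> 0" by (simp add: vec_eq_iff)
  ultimately show "c \<in> {cmod z | z. \<exists>v::complex^'n. v \<noteq> 0 \<and> cmatrix B *v v = z *s v}"
    by (intro CollectI exI[of _ "complex_of_real c"] conjI exI[of _ 1]) auto
qed (use assms(2) in \<open>auto intro!: cmod_eigenvalue_le_row_sum_bound[OF assms(1)]\<close>)

lemma const_row_sums_eq_diag_minus_laplacian:
  fixes A B :: "real^'n::finite^'n"
  assumes "\<And>k l. k \<noteq> l \<Longrightarrow> B$k$l = A$k$l" "\<And>k. (\<Sum>l\<in>UNIV. B$k$l) = c"
  shows "B = c *\<^sub>R mat 1 - laplacian A"
proof -
  have "B$k$k = c - laplacian A $ k $ k" for k
  proof -
    have "(\<Sum>l\<in>UNIV - {k}. B$k$l) = (\<Sum>l\<in>UNIV - {k}. A$k$l)"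
      using assms(1) by (intro sum.cong) auto
    then show ?thesis
      using assms(2)[of k] sum.remove[of UNIV k "\<lambda>l. B$k$l"] sum.remove[of UNIV k "\<lambda>l. A$k$l"]
      by (simp add: laplacian_def)
  qed
  then show ?thesis
    using assms(1) by (simp add: vec_eq_iff laplacian_def mat_def)
qed

lemma id_minus_scaled_diag_minus_laplacian:
  fixes A :: "real^'n::finite^'n"
  assumes "\<alpha> > 0" "c \<ge> 0"
  shows "mat 1 - (1 / (c + 1 / \<alpha>)) *\<^sub>R (c *\<^sub>R mat 1 - laplacian A)
           = inverse (1 + \<alpha> * c) *\<^sub>R (mat 1 + \<alpha> *\<^sub>R laplacian A)"
proof -
  define s where "s = 1 + \<alpha> * c"
  have "s > 0" using assms by (simp add: s_def add_pos_nonneg)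
  have t: "1 / (c + 1 / \<alpha>) = \<alpha> * inverse s"
    using assms by (simp add: s_def field_simps)
  have "mat 1 - (\<alpha> * inverse s) *\<^sub>R (c *\<^sub>R mat 1 - laplacian A)
      = (1 - \<alpha> * inverse s * c) *\<^sub>R mat 1 + (\<alpha> * inverse s) *\<^sub>R laplacian A"
    by (simp add: algebra_simps)
  also have "1 - \<alpha> * inverse s * c = inverse s"
    using \<open>s > 0\<close> by (simp add: s_def field_simps)
  finally show ?thesis
    unfolding t s_def[symmetric] by (simp add: algebra_simps)
qed

lemma log_dist_scaleR:
  assumes "s > 0" "M$i$i > 0" "M$j$j > 0" "M$i$j > 0"
  shows "log_dist n \<alpha> (s *\<^sub>R M) i j = log_dist n \<alpha> M i j"
  using assms by (simp add: log_dist_def ln_mult algebra_simps)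

lemma multigraph_wadj_nonneg:
  assumes "multigraph E ends w"
  shows "wadj E ends w $ k $ l \<ge> 0"
  using assms unfolding multigraph_def wadj_def by (auto intro: sum_nonneg less_imp_le)

lemma multigraph_wadj_pos:
  assumes "multigraph E ends w" "e \<in> E" "ends e = {k, l}"
  shows "wadj E ends w $ k $ l > 0"
proof -
  have fin: "finite E" and pos: "\<And>e. e \<in> E \<Longrightarrow> w e > 0"
    using assms(1) unfolding multigraph_def by auto
  have "w e \<le> (\<Sum>e'\<in>{e'\<in>E. ends e' = {k, l}}. w e')"
    by (rule member_le_sum) (use assms(2,3) fin pos in \<open>auto intro: less_imp_le\<close>)
  with pos[OF assms(2)] show ?thesis unfolding wadj_def by simp
qed

lemma mg_connected_wadj_support:
  assumes "multigraph E ends w" "mg_connected E ends"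
  shows "(\<lambda>x y. wadj E ends w $ x $ y > 0)\<^sup>*\<^sup>* k l"
proof -
  have "(\<lambda>x y. \<exists>e\<in>E. ends e = {x, y}) \<le> (\<lambda>x y. wadj E ends w $ x $ y > 0)"
    using multigraph_wadj_pos[OF assms(1)] by blast
  from rtranclp_mono[OF this] assms(2) show ?thesis
    unfolding mg_connected_def by blast
qed

lemma balance_graph_multigraph:
  assumes "multigraph E ends w" "balance_graph E ends w E' ends' w'"
  shows "multigraph E' ends' w'"
proof -
  have "ends' e \<noteq> {} \<and> card (ends' e) \<le> 2 \<and> w' e > 0" if "e \<in> E'" for e
  proof (cases "e \<in> E")
    case True
    with assms show ?thesis unfolding multigraph_def balance_graph_def by auto
  next
    case False
    with that assms(2) have "card (ends' e) = 1" "w' e > 0"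
      unfolding balance_graph_def by auto
    then show ?thesis by auto
  qed
  with assms(2) show ?thesis unfolding multigraph_def balance_graph_def by blast
qed

lemma balance_graph_wadj_offdiag:
  assumes "balance_graph E ends w E' ends' w'" "k \<noteq> l"
  shows "wadj E' ends' w' $ k $ l = wadj E ends w $ k $ l"
proof -
  obtain sub: "E \<subseteq> E'" and same: "\<And>e. e \<in> E \<Longrightarrow> ends' e = ends e \<and> w' e = w e"
    and loop: "\<And>e. e \<in> E' - E \<Longrightarrow> card (ends' e) = 1"
    using assms(1) unfolding balance_graph_def by blast
  have "e \<in> E" if "e \<in> E'" "ends' e = {k, l}" for e
  proof (rule ccontr)
    assume "e \<notin> E"
    with that(1) loop have "card (ends' e) = 1" by blast
    with that(2) assms(2) show False by simp
  qed
  then have edges: "{e \<in> E'. ends' e = {k, l}} = {e \<in> E. ends e = {k, l}}"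
    using sub same by blast
  have "wadj E' ends' w' $ k $ l = (\<Sum>e\<in>{e \<in> E. ends e = {k, l}}. w' e)"
    unfolding wadj_def edges[symmetric] by simp
  also have "\<dots> = wadj E ends w $ k $ l"
    unfolding wadj_def using same by (auto intro: sum.cong)
  finally show ?thesis .
qed

theorem corollary6:
  fixes E E' :: "'e set" and ends ends' :: "'e \<Rightarrow> 'n::finite set"
    and w w' :: "'e \<Rightarrow> real" and \<alpha> :: real and i j :: 'n
  assumes "CARD('n) \<ge> 2"
    and "multigraph E ends w"
    and "mg_connected E ends"
    and "balance_graph E ends w E' ends' w'"
    and "\<alpha> > 0"
  shows "forest_dist \<alpha> (wadj E ends w) i j = walk_dist \<alpha> (wadj E' ends' w') i j"
proof -
  let ?A = "wadj E ends w" and ?B = "wadj E' ends' w'"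
  let ?Q = "matrix_inv (mat 1 + \<alpha> *\<^sub>R laplacian ?A)"
  obtain c where row_sums: "\<And>k. (\<Sum>l\<in>UNIV. ?B$k$l) = c"
    using assms(4) unfolding balance_graph_def by blast
  have A_nonneg: "?A$k$l \<ge> 0" and B_nonneg: "?B$k$l \<ge> 0" for k l
    using assms(2,4) multigraph_wadj_nonneg balance_graph_multigraph by blast+
  have "c \<ge> 0"
    using row_sums B_nonneg sum_nonneg by metis
  have "1 + \<alpha> * c > 0"
    using assms(5) \<open>c \<ge> 0\<close> by (simp add: add_pos_nonneg)
  have "?B = c *\<^sub>R mat 1 - laplacian ?A"
    using const_row_sums_eq_diag_minus_laplacian balance_graph_wadj_offdiag[OF assms(4)] row_sums
    by blast
  moreover have "spectral_radius ?B = c"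
    by (rule spectral_radius_const_row_sums[OF B_nonneg row_sums])
  ultimately have "mat 1 - (1 / (spectral_radius ?B + 1 / \<alpha>)) *\<^sub>R ?B
      = inverse (1 + \<alpha> * c) *\<^sub>R (mat 1 + \<alpha> *\<^sub>R laplacian ?A)"
    using id_minus_scaled_diag_minus_laplacian[OF assms(5) \<open>c \<ge> 0\<close>] by simp
  then have walk_matrix: "matrix_inv (mat 1 - (1 / (spectral_radius ?B + 1 / \<alpha>)) *\<^sub>R ?B)
      = (1 + \<alpha> * c) *\<^sub>R ?Q"
    using matrix_inv_scaleR[OF invertible_id_plus_laplacian[OF _ A_nonneg], of \<alpha> "inverse (1 + \<alpha> * c)"]
      assms(5) \<open>1 + \<alpha> * c > 0\<close>
    by simp
  moreover have "?Q$k$l > 0" for k l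
    using forest_matrix_pos[OF assms(5)] A_nonneg mg_connected_wadj_support[OF assms(2,3)] by blast
  ultimately show ?thesis
    unfolding forest_dist_def walk_dist_def Let_def
    by (simp add: log_dist_scaleR[OF \<open>1 + \<alpha> * c > 0\<close>])
qed

end
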